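(* Assume $t_m=1$ and let $d_\beta^*(1)=(t_1t_2\cdots t_{m-1}0)^\omega$. Let $y\in\mathbb Z_\beta^+$ have β-expansion $y_ny_{n-1}\cdots y_0\bullet$, and let $k$ be the maximal index (with $0\le k\le n+1$) such that the word $y_{k-1}y_{k-2}\cdots y_0$ is a prefix of $d_\beta^*(1)$ (the empty word when $k=0$). Then ${\rm succ}(y)=y+T_\beta^{k'}(1)$, where $k'\in\{0,1,\dots,m-1\}$ satisfies $k'\equiv k\pmod m$.
   Context: $\beta>1$ is a simple Parry number with $d_\beta(1)=t_1\cdots t_{m-1}t_m$ ($m\ge2$, $t_1\ge1$, $t_m\ge1$, satisfying the Parry condition). The β-expansion of $x>0$ is the greedy expansion $x=\sum_{i\le k}x_i\beta^i$; we write $x=x_n\cdots x_0\bullet$ when $x_i=0$ for $i<0$, and such $x$ (together with $0$) form $\mathbb Z_\beta^+$. A finite string $x_k\cdots x_0$ over $\{0,\dots,\lceil\beta\rceil-1\}$ is the β-expansion of a β-integer iff each suffix $x_i\cdots x_0$ is lexicographically strictly smaller than $d_\beta(1)$. $\mathbb Z_\beta=\mathbb Z_\beta^+\cup(-\mathbb Z_\beta^+)$, ${\rm succ}(x)=\min\{y\in\mathbb Z_\beta: y>x\}$. $T_\beta(x)=\beta x\bmod1$ and $T_\beta^i(1)=\sum_{j=i+1}^m t_j\beta^{i-j}$ for $0\le i\le m-1$. *)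

theory Defs
  imports Complex_Main
begin

definition beta_T :: "real \<Rightarrow> real \<Rightarrow> real" where
  "beta_T \<beta> x = frac (\<beta> * x)"

text \<open>Renyi digits of 1: d_beta(1) = t_1 t_2 ..., with t_i = floor(beta T^(i-1)(1)).\<close>
definition renyi_digit :: "real \<Rightarrow> nat \<Rightarrow> nat" where
  "renyi_digit \<beta> i = nat \<lfloor>\<beta> * (beta_T \<beta> ^^ (i - 1)) 1\<rfloor>"

text \<open>beta is a simple Parry number with d_beta(1) of length exactly m.\<close>
definition simple_parry :: "real \<Rightarrow> nat \<Rightarrow> bool" where
  "simple_parry \<beta> m \<longleftrightarrow> \<beta> > 1 \<and> (beta_T \<beta> ^^ m) 1 = 0 \<and>
     (\<forall>i<m. (beta_T \<beta> ^^ i) 1 \<noteq> 0)"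

text \<open>The j-th letter (j \<ge> 1) of d*_beta(1) = (t_1 ... t_(m-1) 0)^omega.\<close>
definition dstar_digit :: "real \<Rightarrow> nat \<Rightarrow> nat \<Rightarrow> nat" where
  "dstar_digit \<beta> m j = (if j mod m = 0 then 0 else renyi_digit \<beta> (j mod m))"

text \<open>ds is the (greedy) beta-expansion y = ds n ... ds 0 (dot) of y, i.e. y is a
  nonnegative beta-integer; leading digit nonzero unless y = 0 (then n = 0).\<close>
definition is_beta_int_expansion :: "real \<Rightarrow> real \<Rightarrow> nat \<Rightarrow> (nat \<Rightarrow> nat) \<Rightarrow> bool" where
  "is_beta_int_expansion \<beta> y n ds \<longleftrightarrow>
     0 \<le> y \<and> y < \<beta> ^ (n + 1) \<and> (ds n \<noteq> 0 \<or> n = 0) \<and>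
     (\<forall>i\<le>n. real (ds i) = of_int \<lfloor>(y - (\<Sum>j\<in>{i<..n}. real (ds j) * \<beta> ^ j)) / \<beta> ^ i\<rfloor>) \<and>
     y = (\<Sum>i\<le>n. real (ds i) * \<beta> ^ i)"

definition Zbeta_plus :: "real \<Rightarrow> real set" where
  "Zbeta_plus \<beta> = {y. \<exists>n ds. is_beta_int_expansion \<beta> y n ds}"

definition Zbeta :: "real \<Rightarrow> real set" where
  "Zbeta \<beta> = Zbeta_plus \<beta> \<union> uminus ` Zbeta_plus \<beta>"

definition beta_succ :: "real \<Rightarrow> real \<Rightarrow> real" where
  "beta_succ \<beta> x = (LEAST z. z \<in> Zbeta \<beta> \<and> x < z)"

end

theory Submission
  imports Defs
begin

text \<open>Write \<open>b\<close> for the digits of \<open>y\<close> and \<open>gap j = \<beta>^j - (b\<^sub>j\<^sub>-\<^sub>1 \<dots> b\<^sub>0)\<^sub>\<beta>\<close> for the distance from the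
  value of the lowest \<open>j\<close> digits of \<open>y\<close> up to \<open>\<beta>^j\<close>. Comparing a larger \<open>\<beta>\<close>-integer with \<open>y\<close> at the
  highest differing digit shows that it exceeds \<open>y\<close> by at least some \<open>gap j\<close>, \<open>j \<le> n + 1\<close>;
  conversely, rounding \<open>y\<close> up at the largest position where the least gap is attained gives
  an admissible expansion, so \<open>succ y = y + min\<^sub>j gap j\<close>. For \<open>t\<^sub>m = 1\<close> the orbit \<open>T\<^sup>i(1)\<close> is
  periodic and generated by the digits of \<open>d\<^sup>*(1)\<close>, so along the longest suffix of \<open>y\<close> that is a
  prefix of \<open>d\<^sup>*(1)\<close> the gap is \<open>T\<^sup>k\<^sup>'(1)\<close>; beyond it the first mismatching digit can only be
  smaller than the corresponding digit of \<open>d\<^sup>*(1)\<close>, and this does not decrease the gap.\<close>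

definition beta_value :: "real \<Rightarrow> (nat \<Rightarrow> nat) \<Rightarrow> nat \<Rightarrow> real" where
  "beta_value \<beta> a j = (\<Sum>i<j. real (a i) * \<beta> ^ i)"

definition beta_gap :: "real \<Rightarrow> (nat \<Rightarrow> nat) \<Rightarrow> nat \<Rightarrow> real" where
  "beta_gap \<beta> a j = \<beta> ^ j - beta_value \<beta> a j"

text \<open>An expansion \<open>y\<^sub>n \<dots> y\<^sub>0\<close> leaves the digits above \<open>n\<close> unconstrained; after padding with
  zeros, the value of the lowest \<open>j\<close> digits is \<open>y\<close> for every \<open>j > n\<close>.\<close>
definition zero_pad :: "nat \<Rightarrow> (nat \<Rightarrow> nat) \<Rightarrow> nat \<Rightarrow> nat" where
  "zero_pad n a i = (if i \<le> n then a i else 0)"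

definition round_up :: "nat \<Rightarrow> (nat \<Rightarrow> nat) \<Rightarrow> nat \<Rightarrow> nat" where
  "round_up j a i = (if i < j then 0 else if i = j then a i + 1 else a i)"

definition dstar_prefix :: "real \<Rightarrow> nat \<Rightarrow> (nat \<Rightarrow> nat) \<Rightarrow> nat \<Rightarrow> bool" where
  "dstar_prefix \<beta> m a j \<longleftrightarrow> (\<forall>i<j. a (j - 1 - i) = dstar_digit \<beta> m (i + 1))"

abbreviation orbit_one :: "real \<Rightarrow> nat \<Rightarrow> real" where
  "orbit_one \<beta> i \<equiv> (beta_T \<beta> ^^ i) 1"

lemma beta_value_0 [simp]: "beta_value \<beta> a 0 = 0"
  by (simp add: beta_value_def)

lemma beta_value_Suc: "beta_value \<beta> a (Suc j) = beta_value \<beta> a j + real (a j) * \<beta> ^ j"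
  by (simp add: beta_value_def)

lemma beta_value_nonneg: "\<beta> \<ge> 0 \<Longrightarrow> beta_value \<beta> a j \<ge> 0"
  unfolding beta_value_def by (intro sum_nonneg) auto

lemma beta_value_split:
  assumes "i \<le> n"
  shows "beta_value \<beta> a (Suc n) = beta_value \<beta> a (Suc i) + (\<Sum>j\<in>{i<..n}. real (a j) * \<beta> ^ j)"
proof -
  have "{..<Suc n} = {..<Suc i} \<union> {i<..n}" "{..<Suc i} \<inter> {i<..n} = {}"
    using assms by auto
  then show ?thesis
    unfolding beta_value_def by (simp add: sum.union_disjoint)
qed

lemma beta_value_zero_pad:
  "beta_value \<beta> (zero_pad n a) j = beta_value \<beta> a (min j (Suc n))"
proof (induction j)
  case (Suc j)
  then show ?case
    by (cases "j \<le> n"; cases "j = Suc n") (auto simp: beta_value_Suc zero_pad_def min_def)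
qed simp

lemma beta_gap_zero_pad:
  "j \<le> Suc n \<Longrightarrow> beta_gap \<beta> (zero_pad n a) j = beta_gap \<beta> a j"
  by (simp add: beta_gap_def beta_value_zero_pad)

lemma beta_gap_zero_pad_strict_mono:
  assumes "\<beta> > 1" and "Suc n \<le> i" and "i < j"
  shows "beta_gap \<beta> (zero_pad n a) i < beta_gap \<beta> (zero_pad n a) j"
  using assms power_strict_increasing[of i j \<beta>]
  by (simp add: beta_gap_def beta_value_zero_pad min_absorb2)

lemma beta_value_round_up:
  "beta_value \<beta> (round_up j a) i =
     (if i \<le> j then 0 else beta_value \<beta> a i - beta_value \<beta> a j + \<beta> ^ j)"
proof (induction i)
  case (Suc i)
  then show ?case
    by (cases "i < j"; cases "i = j") (auto simp: beta_value_Suc round_up_def algebra_simps)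
qed simp

text \<open>Take \<open>j\<close> to be the highest position where the digits differ: there \<open>a\<close> has the larger digit
  (by admissibility of \<open>a\<close>), and the lower digits of \<open>a\<close> contribute a nonnegative amount.\<close>
lemma beta_value_less_imp_gap_le:
  assumes "\<beta> > 0" and "\<And>i. beta_value \<beta> a i < \<beta> ^ i"
    and "beta_value \<beta> b N < beta_value \<beta> a N"
  shows "\<exists>j<N. beta_value \<beta> b N + beta_gap \<beta> b j \<le> beta_value \<beta> a N"
  using assms(3)
proof (induction N)
  case 0
  then show ?case by simp
next
  case (Suc N)
  have pos: "\<beta> ^ N > 0"
    using assms(1) by simp
  consider "a N = b N" | "a N < b N" | "b N < a N"
    by linarith
  then show ?case
  proof cases
    case 1
    then obtain j where "j < N" "beta_value \<beta> b N + beta_gap \<beta> b j \<le> beta_value \<beta> a N"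
      using Suc by (auto simp: beta_value_Suc)
    with 1 show ?thesis
      by (intro exI[of _ j]) (auto simp: beta_value_Suc beta_gap_def)
  next
    case 2
    then have "real (a N) + 1 \<le> real (b N)"
      by simp
    then have "(real (a N) + 1) * \<beta> ^ N \<le> real (b N) * \<beta> ^ N"
      using pos by (intro mult_right_mono) auto
    moreover have "beta_value \<beta> a N < \<beta> ^ N" "beta_value \<beta> b N \<ge> 0"
      using assms beta_value_nonneg by auto
    ultimately show ?thesis
      using Suc.prems by (simp add: beta_value_Suc distrib_right)
  next
    case 3
    then have "real (b N) + 1 \<le> real (a N)"
      by simp
    then have "(real (b N) + 1) * \<beta> ^ N \<le> real (a N) * \<beta> ^ N"
      using pos by (intro mult_right_mono) auto
    moreover have "beta_value \<beta> a N \<ge> 0"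
      using assms beta_value_nonneg by auto
    ultimately show ?thesis
      by (intro exI[of _ N]) (auto simp: beta_value_Suc beta_gap_def distrib_right)
  qed
qed

lemma floor_quotient_eq_digit_iff:
  assumes "\<beta> > 1" and "i \<le> n"
  shows "real (a i) = of_int \<lfloor>(beta_value \<beta> a (Suc n) - (\<Sum>j\<in>{i<..n}. real (a j) * \<beta> ^ j)) / \<beta> ^ i\<rfloor>
    \<longleftrightarrow> beta_value \<beta> a i < \<beta> ^ i"
proof -
  have pos: "\<beta> ^ i > 0"
    using assms(1) by simp
  have "beta_value \<beta> a (Suc n) - (\<Sum>j\<in>{i<..n}. real (a j) * \<beta> ^ j)
      = beta_value \<beta> a i + real (a i) * \<beta> ^ i"
    using beta_value_split[OF assms(2), of \<beta> a] by (simp add: beta_value_Suc)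
  then have "(beta_value \<beta> a (Suc n) - (\<Sum>j\<in>{i<..n}. real (a j) * \<beta> ^ j)) / \<beta> ^ i
      = real (a i) + beta_value \<beta> a i / \<beta> ^ i"
    using pos by (simp add: add_divide_distrib del: power_eq_0_iff)
  moreover have "beta_value \<beta> a i / \<beta> ^ i \<ge> 0"
    using assms(1) beta_value_nonneg[of \<beta> a i] by simp
  ultimately show ?thesis
    using pos by (simp add: floor_eq_iff divide_less_eq)
qed

lemma is_beta_int_expansion_iff:
  assumes "\<beta> > 1"
  shows "is_beta_int_expansion \<beta> x n a \<longleftrightarrow>
    (a n \<noteq> 0 \<or> n = 0) \<and> x = beta_value \<beta> a (Suc n) \<and> (\<forall>i\<le>Suc n. beta_value \<beta> a i < \<beta> ^ i)"
proof -
  have sum: "(\<Sum>i\<le>n. real (a i) * \<beta> ^ i) = beta_value \<beta> a (Suc n)"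
    by (simp add: beta_value_def lessThan_Suc_atMost)
  show ?thesis
  proof (cases "x = beta_value \<beta> a (Suc n)")
    case True
    have digits: "(\<forall>i\<le>n. real (a i) =
          of_int \<lfloor>(beta_value \<beta> a (Suc n) - (\<Sum>j\<in>{i<..n}. real (a j) * \<beta> ^ j)) / \<beta> ^ i\<rfloor>)
        \<longleftrightarrow> (\<forall>i\<le>n. beta_value \<beta> a i < \<beta> ^ i)"
      using floor_quotient_eq_digit_iff[OF assms] by blast
    have "(\<forall>i\<le>Suc n. beta_value \<beta> a i < \<beta> ^ i) \<longleftrightarrow>
        beta_value \<beta> a (Suc n) < \<beta> ^ (n + 1) \<and> (\<forall>i\<le>n. beta_value \<beta> a i < \<beta> ^ i)"
      by (auto simp: le_Suc_eq)
    moreover have "0 \<le> beta_value \<beta> a (Suc n)"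
      using assms by (simp add: beta_value_nonneg)
    ultimately show ?thesis
      unfolding is_beta_int_expansion_def sum True digits by blast
  next
    case False
    then show ?thesis
      unfolding is_beta_int_expansion_def sum by blast
  qed
qed

lemma admissible_zero_pad:
  assumes "\<beta> \<ge> 1" and "\<forall>i\<le>Suc n. beta_value \<beta> a i < \<beta> ^ i"
  shows "beta_value \<beta> (zero_pad n a) i < \<beta> ^ i"
proof (cases "i \<le> Suc n")
  case True
  then show ?thesis
    using assms(2) by (simp add: beta_value_zero_pad)
next
  case False
  then have "beta_value \<beta> (zero_pad n a) i = beta_value \<beta> a (Suc n)"
    by (simp add: beta_value_zero_pad)
  also have "\<dots> < \<beta> ^ Suc n"
    using assms(2) by blast
  also have "\<dots> \<le> \<beta> ^ i"
    using False assms(1) by (intro power_increasing) auto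
  finally show ?thesis .
qed

subsection \<open>The successor of a nonnegative \<open>\<beta>\<close>-integer\<close>

lemma Zbeta_plus_nonneg: "v \<in> Zbeta_plus \<beta> \<Longrightarrow> v \<ge> 0"
  unfolding Zbeta_plus_def is_beta_int_expansion_def by blast

lemma Zbeta_greater_imp_gap_le:
  assumes "\<beta> > 1" and y: "is_beta_int_expansion \<beta> y n b"
    and w: "w \<in> Zbeta \<beta>" "y < w"
  shows "\<exists>j\<le>Suc n. y + beta_gap \<beta> b j \<le> w"
proof -
  have "y \<ge> 0"
    using y unfolding is_beta_int_expansion_def by blast
  with w have "w \<in> Zbeta_plus \<beta>"
    unfolding Zbeta_def using Zbeta_plus_nonneg by force
  then obtain nw a where "is_beta_int_expansion \<beta> w nw a"
    unfolding Zbeta_plus_def by blast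
  then have wa: "w = beta_value \<beta> a (Suc nw)" and adm: "\<forall>i\<le>Suc nw. beta_value \<beta> a i < \<beta> ^ i"
    using is_beta_int_expansion_iff[OF assms(1)] by blast+
  have yb: "y = beta_value \<beta> b (Suc n)"
    using y is_beta_int_expansion_iff[OF assms(1)] by blast
  define N where "N = Suc (max n nw)"
  have wN: "beta_value \<beta> (zero_pad nw a) N = w" and yN: "beta_value \<beta> (zero_pad n b) N = y"
    unfolding wa yb N_def beta_value_zero_pad by (simp_all add: min_def)
  have "\<exists>j<N. beta_value \<beta> (zero_pad n b) N + beta_gap \<beta> (zero_pad n b) j
      \<le> beta_value \<beta> (zero_pad nw a) N"
  proof (rule beta_value_less_imp_gap_le)
    show "beta_value \<beta> (zero_pad nw a) i < \<beta> ^ i" for i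
      using admissible_zero_pad[of \<beta> nw a] adm assms(1) by simp
  qed (use assms(1) w(2) wN yN in auto)
  then obtain j where j: "y + beta_gap \<beta> (zero_pad n b) j \<le> w"
    unfolding wN yN by blast
  have "beta_gap \<beta> (zero_pad n b) (min j (Suc n)) \<le> beta_gap \<beta> (zero_pad n b) j"
    using beta_gap_zero_pad_strict_mono[OF assms(1), of n "Suc n" j b]
    by (cases "j \<le> Suc n") (simp_all add: min_def)
  with j show ?thesis
    by (intro exI[of _ "min j (Suc n)"]) (simp add: beta_gap_zero_pad)
qed

lemma round_up_is_beta_int_expansion:
  assumes "\<beta> > 1" and y: "is_beta_int_expansion \<beta> y n b" and "J \<le> Suc n"
    and above: "\<And>i. J < i \<Longrightarrow> i \<le> Suc n \<Longrightarrow> beta_gap \<beta> b J < beta_gap \<beta> b i"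
  shows "is_beta_int_expansion \<beta> (y + beta_gap \<beta> b J) (if J = Suc n then Suc n else n)
    (round_up J (zero_pad n b))"
proof -
  define c where "c = zero_pad n b"
  define n' where "n' = (if J = Suc n then Suc n else n)"
  have lead: "b n \<noteq> 0 \<or> n = 0" and yb: "y = beta_value \<beta> b (Suc n)"
    using y is_beta_int_expansion_iff[OF assms(1)] by blast+
  have n': "J \<le> n'" "n \<le> n'" "n' \<le> Suc n"
    using assms(3) unfolding n'_def by auto
  have gap_c: "beta_gap \<beta> c J = beta_gap \<beta> b J"
    using assms(3) by (simp add: c_def beta_gap_zero_pad)
  have "beta_value \<beta> (round_up J c) (Suc n') = beta_value \<beta> c (Suc n') + beta_gap \<beta> c J"
    using n'(1) by (simp add: beta_value_round_up beta_gap_def)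
  also have "\<dots> = y + beta_gap \<beta> b J"
    using n'(2) gap_c by (simp add: c_def beta_value_zero_pad yb)
  finally have rounded: "beta_value \<beta> (round_up J c) (Suc n') = y + beta_gap \<beta> b J" .
  have "beta_value \<beta> (round_up J c) i < \<beta> ^ i" if "i \<le> Suc n'" for i
  proof (cases "i \<le> J")
    case True
    then show ?thesis
      using assms(1) by (simp add: beta_value_round_up)
  next
    case False
    have "beta_gap \<beta> c J < beta_gap \<beta> c i"
    proof (cases "i \<le> Suc n")
      case True
      then show ?thesis
        using above[of i] False gap_c by (simp add: c_def beta_gap_zero_pad)
    next
      case outside: False
      then have "J = Suc n"
        using that n'_def by (auto split: if_splits)
      then show ?thesis
        using outside unfolding c_def by (intro beta_gap_zero_pad_strict_mono[OF assms(1)]) auto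
    qed
    then show ?thesis
      using False by (simp add: beta_value_round_up beta_gap_def)
  qed
  moreover have "round_up J c n' \<noteq> 0 \<or> n' = 0"
    using lead n'(1) unfolding n'_def round_up_def c_def zero_pad_def by auto
  ultimately show ?thesis
    using rounded unfolding c_def n'_def [symmetric]
    by (simp add: is_beta_int_expansion_iff[OF assms(1)])
qed

text \<open>Rounding up at the largest position where the least gap is attained keeps the expansion
  admissible, since all gaps above that position are strictly larger.\<close>
lemma add_least_gap_in_Zbeta:
  assumes "\<beta> > 1" and y: "is_beta_int_expansion \<beta> y n b"
    and "k \<le> Suc n" and least: "\<And>j. j \<le> Suc n \<Longrightarrow> beta_gap \<beta> b k \<le> beta_gap \<beta> b j"
  shows "y + beta_gap \<beta> b k \<in> Zbeta \<beta>"
proof -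
  define P where "P j \<longleftrightarrow> j \<le> Suc n \<and> beta_gap \<beta> b j = beta_gap \<beta> b k" for j
  define J where "J = (GREATEST j. P j)"
  have J: "J \<le> Suc n" "beta_gap \<beta> b J = beta_gap \<beta> b k"
    using GreatestI_nat[of P k "Suc n"] assms(3) unfolding J_def P_def by auto
  have "beta_gap \<beta> b J < beta_gap \<beta> b i" if "J < i" "i \<le> Suc n" for i
  proof -
    have "\<not> P i"
      using Greatest_le_nat[of P i "Suc n"] that(1) unfolding J_def P_def by auto
    then show ?thesis
      using least[of i] that(2) J(2) unfolding P_def by auto
  qed
  then have "is_beta_int_expansion \<beta> (y + beta_gap \<beta> b k) (if J = Suc n then Suc n else n)
      (round_up J (zero_pad n b))"
    using round_up_is_beta_int_expansion[OF assms(1) y J(1)] J(2) by simp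
  then show ?thesis
    by (auto simp: Zbeta_def Zbeta_plus_def)
qed

theorem beta_succ_eq_least_gap:
  assumes "\<beta> > 1" and "is_beta_int_expansion \<beta> y n b"
    and "k \<le> Suc n" and "\<And>j. j \<le> Suc n \<Longrightarrow> beta_gap \<beta> b k \<le> beta_gap \<beta> b j"
  shows "beta_succ \<beta> y = y + beta_gap \<beta> b k"
  unfolding beta_succ_def
proof (rule Least_equality)
  have "beta_value \<beta> b k < \<beta> ^ k"
    using assms is_beta_int_expansion_iff by blast
  then show "y + beta_gap \<beta> b k \<in> Zbeta \<beta> \<and> y < y + beta_gap \<beta> b k"
    using add_least_gap_in_Zbeta[OF assms] by (simp add: beta_gap_def)
next
  fix w
  assume "w \<in> Zbeta \<beta> \<and> y < w"
  then show "y + beta_gap \<beta> b k \<le> w"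
    using Zbeta_greater_imp_gap_le[OF assms(1,2)] assms(4) by force
qed

subsection \<open>The orbit of 1 under \<open>T\<^sub>\<beta>\<close>\<close>

lemma orbit_one_bounds: "0 \<le> orbit_one \<beta> i \<and> orbit_one \<beta> i \<le> 1"
  by (cases i) (auto simp: beta_T_def frac_lt_1 less_imp_le)

lemma orbit_one_Suc:
  assumes "\<beta> > 0"
  shows "orbit_one \<beta> (Suc i) = \<beta> * orbit_one \<beta> i - real (renyi_digit \<beta> (Suc i))"
proof -
  have "\<beta> * orbit_one \<beta> i \<ge> 0"
    using assms orbit_one_bounds[of i \<beta>] by simp
  then show ?thesis
    by (simp add: renyi_digit_def beta_T_def frac_def)
qed

text \<open>Since \<open>t\<^sub>m = 1\<close>, \<open>\<beta> T\<^sup>m\<^sup>-\<^sup>1(1) = 1 = T\<^sup>0(1) + 0\<close>: the orbit restarts with the digit 0 of \<open>d\<^sup>*(1)\<close>.\<close>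
lemma orbit_one_Suc_mod:
  assumes "simple_parry \<beta> m" and "m \<ge> 2" and "renyi_digit \<beta> m = 1"
  shows "orbit_one \<beta> (Suc l mod m) = \<beta> * orbit_one \<beta> (l mod m) - real (dstar_digit \<beta> m (Suc l))"
proof -
  have pos: "\<beta> > 0" and "orbit_one \<beta> m = 0"
    using assms(1) by (simp_all add: simple_parry_def)
  show ?thesis
  proof (cases "Suc l mod m = 0")
    case True
    then have "l mod m = m - 1"
      using assms(2) by (metis diff_Suc_1 mod_Suc nat.distinct(1))
    moreover have "\<beta> * orbit_one \<beta> (m - 1) = 1"
      using orbit_one_Suc[OF pos, of "m - 1"] assms(2,3) \<open>orbit_one \<beta> m = 0\<close> by simp
    ultimately show ?thesis
      using True by (simp add: dstar_digit_def)
  next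
    case False
    then have "Suc l mod m = Suc (l mod m)"
      by (metis mod_Suc)
    then show ?thesis
      using False orbit_one_Suc[OF pos, of "l mod m"] by (simp add: dstar_digit_def)
  qed
qed

subsection \<open>Gaps along prefixes of \<open>d\<^sup>*\<^sub>\<beta>(1)\<close>\<close>

lemma beta_gap_dstar_prefix:
  assumes "simple_parry \<beta> m" and "m \<ge> 2" and "renyi_digit \<beta> m = 1"
    and "p \<le> j" and "\<forall>i<p. a (j - 1 - i) = dstar_digit \<beta> m (i + 1)"
  shows "beta_gap \<beta> a j = \<beta> ^ (j - p) * orbit_one \<beta> (p mod m) - beta_value \<beta> a (j - p)"
  using assms(4,5)
proof (induction p)
  case 0
  then show ?case
    by (simp add: beta_gap_def)
next
  case (Suc p)
  define q where "q = j - Suc p"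
  have q: "j - p = Suc q" "j - Suc p = q"
    using Suc.prems unfolding q_def by auto
  have digit: "a q = dstar_digit \<beta> m (Suc p)"
    using Suc.prems(2) q by auto
  have "beta_gap \<beta> a j = \<beta> ^ Suc q * orbit_one \<beta> (p mod m) - beta_value \<beta> a (Suc q)"
    using Suc q by simp
  also have "\<dots> = \<beta> ^ q * (\<beta> * orbit_one \<beta> (p mod m) - real (a q)) - beta_value \<beta> a q"
    by (simp add: beta_value_Suc algebra_simps)
  also have "\<dots> = \<beta> ^ q * orbit_one \<beta> (Suc p mod m) - beta_value \<beta> a q"
    using digit orbit_one_Suc_mod[OF assms(1-3), of p] by simp
  finally show ?case
    using q by simp
qed

lemma beta_gap_dstar_prefix_le:
  assumes "simple_parry \<beta> m" and "m \<ge> 2" and "renyi_digit \<beta> m = 1"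
    and "dstar_prefix \<beta> m a k" and "j \<le> k"
  shows "beta_gap \<beta> a k \<le> beta_gap \<beta> a j"
proof -
  have "beta_gap \<beta> a k = \<beta> ^ j * orbit_one \<beta> ((k - j) mod m) - beta_value \<beta> a j"
    using beta_gap_dstar_prefix[OF assms(1-3), of "k - j" k a] assms(4,5)
    by (simp add: dstar_prefix_def)
  also have "\<dots> \<le> \<beta> ^ j * 1 - beta_value \<beta> a j"
    using orbit_one_bounds[of "(k - j) mod m" \<beta>] assms(1)
    by (intro diff_right_mono mult_left_mono) (auto simp: simple_parry_def)
  finally show ?thesis
    by (simp add: beta_gap_def)
qed

text \<open>Let \<open>a\<^sub>q\<close> be the first digit deviating from \<open>d\<^sup>*(1)\<close>. If it is larger, the gap at \<open>j\<close> is
  nonpositive, contradicting admissibility; if it is smaller, the gap at \<open>j\<close> is at least the gap at \<open>q\<close>.\<close>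
lemma beta_gap_dstar_mismatch:
  assumes "simple_parry \<beta> m" and "m \<ge> 2" and "renyi_digit \<beta> m = 1"
    and adm: "beta_value \<beta> a j < \<beta> ^ j" and "\<not> dstar_prefix \<beta> m a j"
  shows "\<exists>q<j. beta_gap \<beta> a q \<le> beta_gap \<beta> a j"
proof -
  have pos: "\<beta> > 0"
    using assms(1) by (simp add: simple_parry_def)
  obtain p where p: "p < j" "a (j - 1 - p) \<noteq> dstar_digit \<beta> m (p + 1)"
    and before: "\<forall>i<p. a (j - 1 - i) = dstar_digit \<beta> m (i + 1)"
    using assms(5) exists_least_iff[of "\<lambda>i. i < j \<and> a (j - 1 - i) \<noteq> dstar_digit \<beta> m (i + 1)"]
    unfolding dstar_prefix_def by (metis less_trans)
  define q where "q = j - 1 - p"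
  define t where "t = orbit_one \<beta> (Suc p mod m)"
  define d where "d = real (dstar_digit \<beta> m (Suc p))"
  have "j - p = Suc q"
    using p(1) unfolding q_def by linarith
  then have "beta_gap \<beta> a j = \<beta> ^ Suc q * orbit_one \<beta> (p mod m) - beta_value \<beta> a (Suc q)"
    using beta_gap_dstar_prefix[OF assms(1-3), of p j a] p(1) before by simp
  also have "\<dots> = \<beta> ^ q * (\<beta> * orbit_one \<beta> (p mod m) - real (a q)) - beta_value \<beta> a q"
    by (simp add: beta_value_Suc algebra_simps)
  also have "\<beta> * orbit_one \<beta> (p mod m) = t + d"
    using orbit_one_Suc_mod[OF assms(1-3), of p] unfolding t_def d_def by simp
  finally have gap: "beta_gap \<beta> a j = \<beta> ^ q * (t + d - real (a q)) - beta_value \<beta> a q" .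
  have t: "0 \<le> t" "t \<le> 1" and "\<beta> ^ q > 0"
    using orbit_one_bounds pos unfolding t_def by auto
  show ?thesis
  proof (cases "a q < dstar_digit \<beta> m (Suc p)")
    case True
    then have "1 \<le> t + d - real (a q)"
      using t unfolding d_def by linarith
    then have "\<beta> ^ q \<le> \<beta> ^ q * (t + d - real (a q))"
      using \<open>\<beta> ^ q > 0\<close> mult_left_mono[of 1 "t + d - real (a q)" "\<beta> ^ q"] by simp
    moreover have "q < j"
      using p(1) unfolding q_def by simp
    ultimately show ?thesis
      using gap by (intro exI[of _ q]) (simp add: beta_gap_def)
  next
    case False
    then have "t + d - real (a q) \<le> 0"
      using p(2) t unfolding d_def q_def by simp
    then have "\<beta> ^ q * (t + d - real (a q)) \<le> 0"
      using \<open>\<beta> ^ q > 0\<close> by (simp add: mult_nonneg_nonpos)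
    then have "beta_gap \<beta> a j \<le> 0"
      using gap beta_value_nonneg[of \<beta> a q] pos by linarith
    with adm show ?thesis
      by (simp add: beta_gap_def)
  qed
qed

lemma beta_gap_longest_dstar_prefix_least:
  assumes "simple_parry \<beta> m" and "m \<ge> 2" and "renyi_digit \<beta> m = 1"
    and adm: "\<forall>i\<le>K. beta_value \<beta> a i < \<beta> ^ i"
    and "dstar_prefix \<beta> m a k" and longest: "\<And>j. j \<le> K \<Longrightarrow> dstar_prefix \<beta> m a j \<Longrightarrow> j \<le> k"
    and "j \<le> K"
  shows "beta_gap \<beta> a k \<le> beta_gap \<beta> a j"
  using assms(7)
proof (induction j rule: less_induct)
  case (less j)
  show ?case
  proof (cases "j \<le> k")
    case True
    then show ?thesis
      using beta_gap_dstar_prefix_le[OF assms(1-3,5)] by blast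
  next
    case False
    then obtain q where "q < j" "beta_gap \<beta> a q \<le> beta_gap \<beta> a j"
      using beta_gap_dstar_mismatch[OF assms(1-3)] longest adm less.prems by force
    then show ?thesis
      using less by force
  qed
qed

theorem mainTheorem16:
  fixes \<beta> y :: real and m n k :: nat and ds :: "nat \<Rightarrow> nat"
  assumes "simple_parry \<beta> m" and "m \<ge> 2"
    and "renyi_digit \<beta> m = 1"
    and "is_beta_int_expansion \<beta> y n ds"
    and "k = (GREATEST k. k \<le> n + 1 \<and> (\<forall>i<k. ds (k - 1 - i) = dstar_digit \<beta> m (i + 1)))"
  shows "beta_succ \<beta> y = y + (beta_T \<beta> ^^ (k mod m)) 1"
proof -
  have \<beta>: "\<beta> > 1"
    using assms(1) by (simp add: simple_parry_def)
  have k_greatest: "k = (GREATEST k. k \<le> Suc n \<and> dstar_prefix \<beta> m ds k)"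
    using assms(5) by (simp add: dstar_prefix_def)
  have k: "k \<le> Suc n" "dstar_prefix \<beta> m ds k"
    using GreatestI_nat[of "\<lambda>k. k \<le> Suc n \<and> dstar_prefix \<beta> m ds k" 0 "Suc n"]
    unfolding k_greatest by (auto simp: dstar_prefix_def)
  have longest: "j \<le> k" if "j \<le> Suc n" "dstar_prefix \<beta> m ds j" for j
    using Greatest_le_nat[of "\<lambda>k. k \<le> Suc n \<and> dstar_prefix \<beta> m ds k" j "Suc n"] that
    unfolding k_greatest by blast
  have adm: "\<forall>i\<le>Suc n. beta_value \<beta> ds i < \<beta> ^ i"
    using assms(4) is_beta_int_expansion_iff[OF \<beta>] by blast
  have "beta_succ \<beta> y = y + beta_gap \<beta> ds k"
    using beta_succ_eq_least_gap[OF \<beta> assms(4) k(1)]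
      beta_gap_longest_dstar_prefix_least[OF assms(1-3) adm k(2) longest] by blast
  also have "beta_gap \<beta> ds k = orbit_one \<beta> (k mod m)"
    using beta_gap_dstar_prefix[OF assms(1-3), of k k ds] k(2) by (simp add: dstar_prefix_def)
  finally show ?thesis .
qed

end
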